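(* Let $A=\langle Q,F,\delta,\gamma\rangle$ be a finite and fork-acyclic pomset automaton. For every $q\in Q$ one can construct a series-rational expression $e_q$ such that $[\![e_q]\!]=L_A(q)$.
   Context: Fix a finite alphabet $\Sigma$. Pomsets are isomorphism classes of finite labelled posets over $\Sigma$; $1$ is the empty pomset; sequential composition $U\cdot V$ is the disjoint union with all elements of $U$ below all elements of $V$; parallel composition $U\parallel V$ is the disjoint union of orders. $\mathsf{SP}(\Sigma)$ is the smallest set containing $1$ and the one-element pomsets $a\in\Sigma$ closed under $\cdot,\parallel$; these operations lift pointwise to sets, and $L^*=\bigcup_n L^n$ with $L^0=\{1\}$, $L^{n+1}=L\cdot L^n$. Series-rational expressions: $e,f::=0\mid 1\mid a\in\Sigma\mid e+f\mid e\cdot f\mid e\parallel f\mid e^*$ with $[\![0]\!]=\emptyset$, $[\![1]\!]=\{1\}$, $[\![a]\!]=\{a\}$, $[\![e+f]\!]=[\![e]\!]\cup[\![f]\!]$, $[\![e\cdot f]\!]=[\![e]\!]\cdot[\![f]\!]$, $[\![e\parallel f]\!]=[\![e]\!]\parallel[\![f]\!]$, $[\![e^*]\!]=[\![e]\!]^*$. A pomset automaton is $A=\langle Q,F,\delta,\gamma\rangle$ with $F\subseteq Q$, $\delta:Q\times\Sigma\to2^Q$, $\gamma:Q\times\mathbb{M}(Q)\to2^Q$ ($\mathbb{M}(Q)$ finite multisets over $Q$), each $q$ having finitely many $\phi$ with $\gamma(q,\phi)\ne\emptyset$; it is finite if $Q$ is finite. The run relation $\to_A$ is the smallest relation with: $q\xrightarrow{1}_A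 q$; $q\xrightarrow{a}_A q'$ if $q'\in\delta(q,a)$; $q\xrightarrow{U\cdot V}_A q'$ if $q\xrightarrow{U}_A q''\xrightarrow{V}_A q'$; $q\xrightarrow{U_1\parallel\cdots\parallel U_n}_A q'$ if $q'\in\gamma(q,\{\!|q_1,\dots,q_n|\!\})$ and each $q_i\xrightarrow{U_i}_A q_i'$ for some $q_i'\in F$. $L_A(q)=\{U\mid\exists q'\in F.\ q\xrightarrow{U}_A q'\}$. The support relation $\preceq_A$ is the smallest preorder with $q'\preceq_A q$ whenever $q'\in\delta(q,a)$, or $q'\in\gamma(q,\phi)$, or $q'\in\phi$ with $\gamma(q,\phi)\ne\emptyset$; $A$ is fork-acyclic if $r\in\phi$ and $\gamma(q,\phi)\ne\emptyset$ imply $q\not\preceq_A r$. *)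

theory Defs
  imports Main "HOL-Library.Multiset"
begin

text \<open>A concrete labelled poset: carrier (a set of naturals), a partial order on it,
  and a labelling. Only the values of the labelling on the carrier matter.\<close>
type_synonym 'a lpo = "nat set \<times> (nat \<times> nat) set \<times> (nat \<Rightarrow> 'a)"

definition wf_lpo :: "'a lpo \<Rightarrow> bool" where
  "wf_lpo X = (case X of (C, R, l) \<Rightarrow> finite C \<and> R \<subseteq> C \<times> C \<and> partial_order_on C R)"

definition lpo_iso :: "'a lpo \<Rightarrow> 'a lpo \<Rightarrow> bool" where
  "lpo_iso X Y = (case X of (C, R, l) \<Rightarrow> case Y of (D, S, m) \<Rightarrow>
     (\<exists>f. bij_betw f C D \<and> (\<forall>x\<in>C. \<forall>y\<in>C. (x, y) \<in> R \<longleftrightarrow> (f x, f y) \<in> S)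
          \<and> (\<forall>x\<in>C. m (f x) = l x)))"

type_synonym 'a pomset = "'a lpo set"

definition cls :: "'a lpo \<Rightarrow> 'a pomset" where
  "cls X = {Y. wf_lpo Y \<and> lpo_iso X Y}"

definition is_pomset :: "'a pomset \<Rightarrow> bool" where
  "is_pomset U = (\<exists>X. wf_lpo X \<and> U = cls X)"

definition rep :: "'a pomset \<Rightarrow> 'a lpo" where
  "rep U = (SOME X. X \<in> U)"

definition one_lpo :: "'a lpo" where
  "one_lpo = ({}, {}, \<lambda>_. undefined)"

definition atom_lpo :: "'a \<Rightarrow> 'a lpo" where
  "atom_lpo a = ({0}, {(0, 0)}, \<lambda>_. a)"

text \<open>Disjoint union: left copy on even numbers, right copy on odd numbers.\<close>
definition seq_lpo :: "'a lpo \<Rightarrow> 'a lpo \<Rightarrow> 'a lpo" where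
  "seq_lpo X Y = (case X of (C, R, l) \<Rightarrow> case Y of (D, S, m) \<Rightarrow>
     ((\<lambda>x. 2 * x) ` C \<union> (\<lambda>x. 2 * x + 1) ` D,
      {(2 * x, 2 * y) | x y. (x, y) \<in> R} \<union> {(2 * x + 1, 2 * y + 1) | x y. (x, y) \<in> S}
        \<union> {(2 * x, 2 * y + 1) | x y. x \<in> C \<and> y \<in> D},
      \<lambda>z. if even z then l (z div 2) else m (z div 2)))"

definition par_lpo :: "'a lpo \<Rightarrow> 'a lpo \<Rightarrow> 'a lpo" where
  "par_lpo X Y = (case X of (C, R, l) \<Rightarrow> case Y of (D, S, m) \<Rightarrow>
     ((\<lambda>x. 2 * x) ` C \<union> (\<lambda>x. 2 * x + 1) ` D,
      {(2 * x, 2 * y) | x y. (x, y) \<in> R} \<union> {(2 * x + 1, 2 * y + 1) | x y. (x, y) \<in> S},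
      \<lambda>z. if even z then l (z div 2) else m (z div 2)))"

definition pone :: "'a pomset" where
  "pone = cls one_lpo"

definition patom :: "'a \<Rightarrow> 'a pomset" where
  "patom a = cls (atom_lpo a)"

definition pseq :: "'a pomset \<Rightarrow> 'a pomset \<Rightarrow> 'a pomset" where
  "pseq U V = cls (seq_lpo (rep U) (rep V))"

definition ppar :: "'a pomset \<Rightarrow> 'a pomset \<Rightarrow> 'a pomset" where
  "ppar U V = cls (par_lpo (rep U) (rep V))"

fun ppar_list :: "'a pomset list \<Rightarrow> 'a pomset" where
  "ppar_list [] = pone"
| "ppar_list (U # Us) = ppar U (ppar_list Us)"

definition lseq :: "'a pomset set \<Rightarrow> 'a pomset set \<Rightarrow> 'a pomset set" where
  "lseq L M = {pseq U V | U V. U \<in> L \<and> V \<in> M}"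

definition lpar :: "'a pomset set \<Rightarrow> 'a pomset set \<Rightarrow> 'a pomset set" where
  "lpar L M = {ppar U V | U V. U \<in> L \<and> V \<in> M}"

fun lpow :: "'a pomset set \<Rightarrow> nat \<Rightarrow> 'a pomset set" where
  "lpow L 0 = {pone}"
| "lpow L (Suc n) = lseq L (lpow L n)"

definition lstar :: "'a pomset set \<Rightarrow> 'a pomset set" where
  "lstar L = (\<Union>n. lpow L n)"

datatype 'a srexp = Zero | One | Sym 'a | Plus "'a srexp" "'a srexp"
  | Seq "'a srexp" "'a srexp" | Par "'a srexp" "'a srexp" | Star "'a srexp"

fun sem :: "'a srexp \<Rightarrow> 'a pomset set" where
  "sem Zero = {}"
| "sem One = {pone}"
| "sem (Sym a) = {patom a}"
| "sem (Plus e f) = sem e \<union> sem f"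
| "sem (Seq e f) = lseq (sem e) (sem f)"
| "sem (Par e f) = lpar (sem e) (sem f)"
| "sem (Star e) = lstar (sem e)"

text \<open>The state set Q is the whole type 'q; F is the set of accepting states,
  d the sequential transition function and g the fork transition function.\<close>
definition pomset_automaton :: "('q \<Rightarrow> 'q multiset \<Rightarrow> 'q set) \<Rightarrow> bool" where
  "pomset_automaton g = (\<forall>q. finite {\<phi>. g q \<phi> \<noteq> {}})"

inductive run :: "'q set \<Rightarrow> ('q \<Rightarrow> 'a \<Rightarrow> 'q set) \<Rightarrow> ('q \<Rightarrow> 'q multiset \<Rightarrow> 'q set)
    \<Rightarrow> 'q \<Rightarrow> 'a pomset \<Rightarrow> 'q \<Rightarrow> bool"
  for F d g where
  run_one: "run F d g q pone q"
| run_atom: "q' \<in> d q a \<Longrightarrow> run F d g q (patom a) q'"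
| run_seq: "run F d g q U q'' \<Longrightarrow> run F d g q'' V q' \<Longrightarrow> run F d g q (pseq U V) q'"
| run_par: "q' \<in> g q (mset qs) \<Longrightarrow> length Us = length qs \<Longrightarrow>
    (\<forall>i < length qs. \<exists>qf \<in> F. run F d g (qs ! i) (Us ! i) qf) \<Longrightarrow>
    run F d g q (ppar_list Us) q'"

definition lang :: "'q set \<Rightarrow> ('q \<Rightarrow> 'a \<Rightarrow> 'q set) \<Rightarrow> ('q \<Rightarrow> 'q multiset \<Rightarrow> 'q set)
    \<Rightarrow> 'q \<Rightarrow> 'a pomset set" where
  "lang F d g q = {U. \<exists>q' \<in> F. run F d g q U q'}"

text \<open>One-step support: a pair (q', q) means q' is directly below q.
  The support preorder is its reflexive-transitive closure.\<close>
definition supp_step :: "('q \<Rightarrow> 'a \<Rightarrow> 'q set) \<Rightarrow> ('q \<Rightarrow> 'q multiset \<Rightarrow> 'q set) \<Rightarrow> ('q \<times> 'q) set" where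
  "supp_step d g = {(q', q). (\<exists>a. q' \<in> d q a) \<or> (\<exists>\<phi>. q' \<in> g q \<phi>)
                             \<or> (\<exists>\<phi>. q' \<in># \<phi> \<and> g q \<phi> \<noteq> {})}"

definition supports :: "('q \<Rightarrow> 'a \<Rightarrow> 'q set) \<Rightarrow> ('q \<Rightarrow> 'q multiset \<Rightarrow> 'q set) \<Rightarrow> 'q \<Rightarrow> 'q \<Rightarrow> bool" where
  "supports d g q' q = ((q', q) \<in> (supp_step d g)\<^sup>*)"

definition fork_acyclic :: "('q \<Rightarrow> 'a \<Rightarrow> 'q set) \<Rightarrow> ('q \<Rightarrow> 'q multiset \<Rightarrow> 'q set) \<Rightarrow> bool" where
  "fork_acyclic d g = (\<forall>q \<phi> r. r \<in># \<phi> \<and> g q \<phi> \<noteq> {} \<longrightarrow> \<not> supports d g q r)"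

end

(*
  A run from q is a sequence of single steps, each an atom a with q' \<in> \<delta>(q, a) or a fork
  whose branches are pomsets accepted from the states of the fork.  So L_A(q) consists of the
  sequential compositions of the labels of walks from q to F in the finite graph on Q whose
  edge p \<rightarrow> p' carries the one-step pomsets, and the McNaughton-Yamada construction yields a
  series-rational expression for it once every edge language is series-rational.  An edge
  language is a finite union of atoms and of parallel products of the languages L_A(r) of the
  states r of a fork.  Walks from q stay among the states p \<preceq> q, and by fork-acyclicity the
  states of a fork at such a p have strictly fewer supporters than q; induction on the number
  of supporters therefore provides expressions for their languages.
*)

theory Submission
  imports Defs
begin

definition lpo_iso_wit :: "(nat \<Rightarrow> nat) \<Rightarrow> (nat \<Rightarrow> nat) \<Rightarrow> 'a lpo \<Rightarrow> 'a lpo \<Rightarrow> bool" where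
  "lpo_iso_wit f f' X Y = (case X of (C, R, l) \<Rightarrow> case Y of (D, S, m) \<Rightarrow>
     (\<forall>x\<in>C. f x \<in> D \<and> f' (f x) = x) \<and> (\<forall>y\<in>D. f' y \<in> C \<and> f (f' y) = y)
     \<and> (\<forall>x\<in>C. \<forall>y\<in>C. (x, y) \<in> R \<longleftrightarrow> (f x, f y) \<in> S) \<and> (\<forall>x\<in>C. m (f x) = l x))"

lemma lpo_iso_iff_wit: "lpo_iso X Y \<longleftrightarrow> (\<exists>f f'. lpo_iso_wit f f' X Y)"
proof (cases X, cases Y)
  fix C R l D S m
  assume XY: "X = (C, R, l)" "Y = (D, S, m)"
  show ?thesis
  proof
    assume "lpo_iso X Y"
    then obtain f where "bij_betw f C D" "\<forall>x\<in>C. \<forall>y\<in>C. (x, y) \<in> R \<longleftrightarrow> (f x, f y) \<in> S"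
      "\<forall>x\<in>C. m (f x) = l x"
      unfolding lpo_iso_def XY by auto
    then have "lpo_iso_wit f (inv_into C f) X Y"
      unfolding lpo_iso_wit_def XY
      by (auto simp: bij_betw_inv_into_left bij_betw_inv_into_right bij_betw_apply
                     bij_betw_inv_into[THEN bij_betw_apply])
    then show "\<exists>f f'. lpo_iso_wit f f' X Y" by blast
  next
    assume "\<exists>f f'. lpo_iso_wit f f' X Y"
    then obtain f f' where wit: "lpo_iso_wit f f' X Y" by blast
    then have "bij_betw f C D"
      unfolding lpo_iso_wit_def XY by (intro bij_betw_byWitness[where f' = f']) auto
    with wit show "lpo_iso X Y"
      unfolding lpo_iso_def lpo_iso_wit_def XY by auto
  qed
qed

lemma lpo_iso_refl: "lpo_iso X X"
  unfolding lpo_iso_iff_wit lpo_iso_wit_def by (cases X) (auto intro!: exI[of _ id])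

lemma lpo_iso_sym: "lpo_iso X Y \<Longrightarrow> lpo_iso Y X"
  unfolding lpo_iso_iff_wit lpo_iso_wit_def by (cases X, cases Y) (simp, metis)

lemma lpo_iso_trans: "lpo_iso X Y \<Longrightarrow> lpo_iso Y Z \<Longrightarrow> lpo_iso X Z"
  unfolding lpo_iso_iff_wit
proof (elim exE)
  fix f f' h h'
  assume "lpo_iso_wit f f' X Y" "lpo_iso_wit h h' Y Z"
  then have "lpo_iso_wit (h \<circ> f) (f' \<circ> h') X Z"
    unfolding lpo_iso_wit_def by (cases X, cases Y, cases Z) auto
  then show "\<exists>f f'. lpo_iso_wit f f' X Z" by blast
qed

lemma cls_eq_if_iso: "lpo_iso X Y \<Longrightarrow> cls X = cls Y"
  unfolding cls_def by (blast intro: lpo_iso_sym lpo_iso_trans)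

lemma rep_cls:
  assumes "wf_lpo X"
  shows "wf_lpo (rep (cls X))" and "lpo_iso X (rep (cls X))"
proof -
  have "X \<in> cls X"
    using assms lpo_iso_refl unfolding cls_def by blast
  then have "rep (cls X) \<in> cls X"
    unfolding rep_def by (rule someI)
  then show "wf_lpo (rep (cls X))" "lpo_iso X (rep (cls X))"
    unfolding cls_def by auto
qed

lemma mem_double_image: "z \<in> (\<lambda>x. 2 * x) ` C \<longleftrightarrow> even z \<and> z div 2 \<in> C" for z :: nat
proof
  assume "even z \<and> z div 2 \<in> C"
  then show "z \<in> (\<lambda>x. 2 * x) ` C" by (intro image_eqI[of z _ "z div 2"]) auto
qed auto

lemma mem_double_Suc_image: "z \<in> (\<lambda>x. 2 * x + 1) ` C \<longleftrightarrow> odd z \<and> z div 2 \<in> C" for z :: nat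
proof
  assume "odd z \<and> z div 2 \<in> C"
  then show "z \<in> (\<lambda>x. 2 * x + 1) ` C" by (intro image_eqI[of z _ "z div 2"]) auto
qed auto

lemma mem_double_pairs:
  "(z, w) \<in> {(2 * x, 2 * y) | x y. P x y} \<longleftrightarrow> even z \<and> even w \<and> P (z div 2) (w div 2)"
  for z w :: nat
proof
  assume "even z \<and> even w \<and> P (z div 2) (w div 2)"
  then show "(z, w) \<in> {(2 * x, 2 * y) | x y. P x y}"
    by (intro CollectI exI[of _ "z div 2"] exI[of _ "w div 2"]) auto
qed auto

lemma mem_double_Suc_pairs:
  "(z, w) \<in> {(2 * x + 1, 2 * y + 1) | x y. P x y} \<longleftrightarrow> odd z \<and> odd w \<and> P (z div 2) (w div 2)"
  for z w :: nat
proof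
  assume "odd z \<and> odd w \<and> P (z div 2) (w div 2)"
  then show "(z, w) \<in> {(2 * x + 1, 2 * y + 1) | x y. P x y}"
    by (intro CollectI exI[of _ "z div 2"] exI[of _ "w div 2"]) auto
qed auto

lemma mem_double_cross_pairs:
  "(z, w) \<in> {(2 * x, 2 * y + 1) | x y. P x y} \<longleftrightarrow> even z \<and> odd w \<and> P (z div 2) (w div 2)"
  for z w :: nat
proof
  assume "even z \<and> odd w \<and> P (z div 2) (w div 2)"
  then show "(z, w) \<in> {(2 * x, 2 * y + 1) | x y. P x y}"
    by (intro CollectI exI[of _ "z div 2"] exI[of _ "w div 2"]) auto
qed auto

lemmas mem_double_constructions =
  mem_double_image mem_double_Suc_image mem_double_pairs mem_double_Suc_pairs mem_double_cross_pairs

lemma eq_if_parity_div_eq: "(even x \<longleftrightarrow> even y) \<Longrightarrow> x div 2 = y div 2 \<Longrightarrow> x = y" for x y :: nat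
  by (metis div_mult_mod_eq mod2_eq_if)

lemma wf_lpo_double_union:
  assumes "wf_lpo (C, R, l)" "wf_lpo (D, S, m)"
  shows "wf_lpo ((\<lambda>x. 2 * x) ` C \<union> (\<lambda>x. 2 * x + 1) ` D,
    {(2 * x, 2 * y) | x y. (x, y) \<in> R} \<union> {(2 * x + 1, 2 * y + 1) | x y. (x, y) \<in> S}
      \<union> {(2 * x, 2 * y + 1) | x y. b \<and> x \<in> C \<and> y \<in> D}, n)"
    (is "wf_lpo (?C, ?R, n)")
proof -
  from assms have po: "R \<subseteq> C \<times> C" "refl_on C R" "trans R" "antisym R"
     "S \<subseteq> D \<times> D" "refl_on D S" "trans S" "antisym S"
    unfolding wf_lpo_def partial_order_on_def preorder_on_def by auto
  note mem = Un_iff mem_double_constructions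
  have "?R \<subseteq> ?C \<times> ?C"
    using po(1,5) unfolding subset_iff split_paired_All mem_Sigma_iff mem by blast
  moreover have "refl_on ?C ?R"
    using po(2,6) unfolding refl_on_def Ball_def mem by blast
  moreover have "trans ?R"
    using po(1,3,5,7) unfolding trans_def mem by blast
  moreover have "antisym ?R"
    using po(4,8) eq_if_parity_div_eq unfolding antisym_def mem by blast
  moreover have "finite ?C"
    using assms unfolding wf_lpo_def by simp
  ultimately show ?thesis
    unfolding wf_lpo_def partial_order_on_def preorder_on_def by simp
qed

lemma wf_seq_lpo: "wf_lpo X \<Longrightarrow> wf_lpo Y \<Longrightarrow> wf_lpo (seq_lpo X Y)"
  using wf_lpo_double_union[where b = True] by (cases X, cases Y) (simp add: seq_lpo_def)

lemma wf_par_lpo: "wf_lpo X \<Longrightarrow> wf_lpo Y \<Longrightarrow> wf_lpo (par_lpo X Y)"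
  using wf_lpo_double_union[where b = False] by (cases X, cases Y) (simp add: par_lpo_def)

lemma seq_lpo_parity: "seq_lpo (C, R, l) (D, S, m) =
  ({z. if even z then z div 2 \<in> C else z div 2 \<in> D},
   {(z, w). (even z \<and> even w \<and> (z div 2, w div 2) \<in> R) \<or> (odd z \<and> odd w \<and> (z div 2, w div 2) \<in> S)
       \<or> (even z \<and> odd w \<and> z div 2 \<in> C \<and> w div 2 \<in> D)},
   \<lambda>z. if even z then l (z div 2) else m (z div 2))"
  \<comment> \<open>\<open>[simplified]\<close>: the simplifier rewrites \<open>2 * x + 1\<close> to \<open>Suc (2 * x)\<close> before these rules apply\<close>
  unfolding seq_lpo_def by (auto simp: mem_double_constructions[simplified])

lemma seq_lpo_cong:
  assumes "lpo_iso X X'" "lpo_iso Y Y'"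
  shows "lpo_iso (seq_lpo X Y) (seq_lpo X' Y')"
proof -
  from assms obtain f f' h h' where "lpo_iso_wit f f' X X'" "lpo_iso_wit h h' Y Y'"
    unfolding lpo_iso_iff_wit by blast
  then have "lpo_iso_wit (\<lambda>z. if even z then 2 * f (z div 2) else 2 * h (z div 2) + 1)
      (\<lambda>z. if even z then 2 * f' (z div 2) else 2 * h' (z div 2) + 1) (seq_lpo X Y) (seq_lpo X' Y')"
    unfolding lpo_iso_wit_def
    by (cases X, cases Y, cases X', cases Y') (auto simp: seq_lpo_parity)
  then show ?thesis
    unfolding lpo_iso_iff_wit by blast
qed

lemma odd_pred_div_two: "odd n \<Longrightarrow> (n - Suc 0) div 2 = n div 2" for n :: nat
  by presburger

lemma seq_lpo_assoc: "lpo_iso (seq_lpo (seq_lpo X Y) Z) (seq_lpo X (seq_lpo Y Z))"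
proof -
  let ?f = "\<lambda>z::nat. if even z \<and> even (z div 2) then 2 * (z div 2 div 2)
    else if even z then 2 * (2 * (z div 2 div 2)) + 1 else 2 * (2 * (z div 2) + 1) + 1"
  let ?f' = "\<lambda>w::nat. if even w then 2 * (2 * (w div 2))
    else if even (w div 2) then 2 * (2 * (w div 2 div 2) + 1) else 2 * (w div 2 div 2) + 1"
  have "lpo_iso_wit ?f ?f' (seq_lpo (seq_lpo X Y) Z) (seq_lpo X (seq_lpo Y Z))"
    unfolding lpo_iso_wit_def
    by (cases X, cases Y, cases Z) (auto simp: seq_lpo_parity odd_pred_div_two)
  then show ?thesis
    unfolding lpo_iso_iff_wit by blast
qed

lemma seq_lpo_one_left: "lpo_iso (seq_lpo one_lpo X) X"
proof -
  have "lpo_iso_wit (\<lambda>z. z div 2) (\<lambda>z. 2 * z + 1) (seq_lpo one_lpo X) X"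
    unfolding lpo_iso_wit_def one_lpo_def
    by (cases X) (auto simp: seq_lpo_parity)
  then show ?thesis
    unfolding lpo_iso_iff_wit by blast
qed

lemma seq_lpo_one_right: "lpo_iso (seq_lpo X one_lpo) X"
proof -
  have "lpo_iso_wit (\<lambda>z. z div 2) (\<lambda>z. 2 * z) (seq_lpo X one_lpo) X"
    unfolding lpo_iso_wit_def one_lpo_def
    by (cases X) (auto simp: seq_lpo_parity)
  then show ?thesis
    unfolding lpo_iso_iff_wit by blast
qed

lemma is_pomset_cls: "wf_lpo X \<Longrightarrow> is_pomset (cls X)"
  unfolding is_pomset_def by blast

lemma pseq_cls: "wf_lpo X \<Longrightarrow> wf_lpo Y \<Longrightarrow> pseq (cls X) (cls Y) = cls (seq_lpo X Y)"
  unfolding pseq_def by (intro cls_eq_if_iso seq_lpo_cong) (simp_all add: rep_cls lpo_iso_sym)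

lemma wf_one_lpo: "wf_lpo one_lpo"
  unfolding wf_lpo_def one_lpo_def by simp

lemma wf_atom_lpo: "wf_lpo (atom_lpo a)"
  unfolding wf_lpo_def atom_lpo_def partial_order_on_def preorder_on_def refl_on_def trans_def antisym_def
  by simp

lemma is_pomset_pone: "is_pomset pone"
  unfolding pone_def by (rule is_pomset_cls[OF wf_one_lpo])

lemma is_pomset_patom: "is_pomset (patom a)"
  unfolding patom_def by (rule is_pomset_cls[OF wf_atom_lpo])

lemma is_pomset_pseq:
  assumes "is_pomset U" "is_pomset V"
  shows "is_pomset (pseq U V)"
proof -
  from assms obtain X Y where "wf_lpo X" "wf_lpo Y" "U = cls X" "V = cls Y"
    unfolding is_pomset_def by blast
  then show ?thesis
    by (simp add: pseq_cls wf_seq_lpo is_pomset_cls)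
qed

lemma is_pomset_ppar:
  assumes "is_pomset U" "is_pomset V"
  shows "is_pomset (ppar U V)"
proof -
  from assms obtain X Y where "wf_lpo X" "wf_lpo Y" "U = cls X" "V = cls Y"
    unfolding is_pomset_def by blast
  then show ?thesis
    unfolding ppar_def by (simp add: rep_cls wf_par_lpo is_pomset_cls)
qed

lemma is_pomset_ppar_list: "(\<And>U. U \<in> set Us \<Longrightarrow> is_pomset U) \<Longrightarrow> is_pomset (ppar_list Us)"
  by (induction Us) (simp_all add: is_pomset_pone is_pomset_ppar)

lemma pseq_assoc:
  assumes "is_pomset U" "is_pomset V" "is_pomset W"
  shows "pseq (pseq U V) W = pseq U (pseq V W)"
proof -
  from assms obtain X Y Z where "wf_lpo X" "wf_lpo Y" "wf_lpo Z" "U = cls X" "V = cls Y" "W = cls Z"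
    unfolding is_pomset_def by blast
  then show ?thesis
    by (simp add: pseq_cls wf_seq_lpo seq_lpo_assoc cls_eq_if_iso)
qed

lemma pseq_pone_left:
  assumes "is_pomset U"
  shows "pseq pone U = U"
proof -
  from assms obtain X where "wf_lpo X" "U = cls X"
    unfolding is_pomset_def by blast
  then show ?thesis
    unfolding pone_def by (simp add: pseq_cls wf_one_lpo seq_lpo_one_left cls_eq_if_iso)
qed

lemma pseq_pone_right:
  assumes "is_pomset U"
  shows "pseq U pone = U"
proof -
  from assms obtain X where "wf_lpo X" "U = cls X"
    unfolding is_pomset_def by blast
  then show ?thesis
    unfolding pone_def by (simp add: pseq_cls wf_one_lpo seq_lpo_one_right cls_eq_if_iso)
qed

definition sr_rational :: "'a pomset set \<Rightarrow> bool" where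
  "sr_rational L \<longleftrightarrow> (\<exists>e. sem e = L)"

lemma sr_rational_empty: "sr_rational {}"
  unfolding sr_rational_def by (metis sem.simps(1))

lemma sr_rational_pone: "sr_rational {pone}"
  unfolding sr_rational_def by (metis sem.simps(2))

lemma sr_rational_patom: "sr_rational {patom a}"
  unfolding sr_rational_def by (metis sem.simps(3))

lemma sr_rational_Un: "sr_rational L \<Longrightarrow> sr_rational M \<Longrightarrow> sr_rational (L \<union> M)"
  unfolding sr_rational_def by (metis sem.simps(4))

lemma sr_rational_lseq: "sr_rational L \<Longrightarrow> sr_rational M \<Longrightarrow> sr_rational (lseq L M)"
  unfolding sr_rational_def by (metis sem.simps(5))

lemma sr_rational_lpar: "sr_rational L \<Longrightarrow> sr_rational M \<Longrightarrow> sr_rational (lpar L M)"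
  unfolding sr_rational_def by (metis sem.simps(6))

lemma sr_rational_lstar: "sr_rational L \<Longrightarrow> sr_rational (lstar L)"
  unfolding sr_rational_def by (metis sem.simps(7))

lemma sr_rational_UN:
  "finite I \<Longrightarrow> (\<And>i. i \<in> I \<Longrightarrow> sr_rational (L i)) \<Longrightarrow> sr_rational (\<Union>i\<in>I. L i)"
  by (induction I rule: finite_induct) (simp_all add: sr_rational_empty sr_rational_Un)

definition conc :: "'b list set \<Rightarrow> 'b list set \<Rightarrow> 'b list set" where
  "conc A B = {u @ v | u v. u \<in> A \<and> v \<in> B}"

fun word_pow :: "'b list set \<Rightarrow> nat \<Rightarrow> 'b list set" where
  "word_pow A 0 = {[]}"
| "word_pow A (Suc n) = conc A (word_pow A n)"

definition word_star :: "'b list set \<Rightarrow> 'b list set" where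
  "word_star A = (\<Union>n. word_pow A n)"

lemma conc_in_lists:
  assumes "A \<subseteq> lists P" "B \<subseteq> lists P"
  shows "conc A B \<subseteq> lists P"
proof
  fix w assume "w \<in> conc A B"
  then obtain u v where "w = u @ v" "u \<in> A" "v \<in> B"
    unfolding conc_def by blast
  with assms show "w \<in> lists P" by auto
qed

lemma word_pow_in_lists: "A \<subseteq> lists P \<Longrightarrow> word_pow A n \<subseteq> lists P"
  by (induction n) (simp_all add: conc_in_lists)

lemma word_star_in_lists: "A \<subseteq> lists P \<Longrightarrow> word_star A \<subseteq> lists P"
  unfolding word_star_def by (simp add: UN_least word_pow_in_lists)

lemma Nil_in_word_star: "[] \<in> word_star A"
  unfolding word_star_def by (rule UN_I[of 0]) simp_all

lemma append_in_word_star: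
  assumes "u \<in> A" "v \<in> word_star A"
  shows "u @ v \<in> word_star A"
proof -
  from assms(2) obtain n where "v \<in> word_pow A n"
    unfolding word_star_def by blast
  with assms(1) have "u @ v \<in> word_pow A (Suc n)"
    unfolding word_pow.simps conc_def by blast
  then show ?thesis
    unfolding word_star_def by blast
qed

lemma word_star_induct [consumes 1, case_names Nil append]:
  assumes "w \<in> word_star A" and "P []" and "\<And>u v. u \<in> A \<Longrightarrow> P v \<Longrightarrow> P (u @ v)"
  shows "P w"
proof -
  from assms(1) obtain n where "w \<in> word_pow A n"
    unfolding word_star_def by blast
  then show ?thesis
  proof (induction n arbitrary: w)
    case (Suc n)
    then obtain u v where "w = u @ v" "u \<in> A" "v \<in> word_pow A n"
      unfolding word_pow.simps conc_def by blast
    with Suc.IH show ?case by (simp add: assms(3))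
  qed (simp add: assms(2))
qed

lemma word_star_mono:
  assumes "A \<subseteq> B"
  shows "word_star A \<subseteq> word_star B"
proof
  fix w assume "w \<in> word_star A"
  then show "w \<in> word_star B"
    by (induction rule: word_star_induct) (use assms in \<open>auto intro: Nil_in_word_star append_in_word_star\<close>)
qed

lemma Un_conc_word_star_subset: "B \<union> conc A (conc (word_star A) B) \<subseteq> conc (word_star A) B"
proof (intro Un_least subsetI)
  fix v assume "v \<in> B"
  then show "v \<in> conc (word_star A) B"
    unfolding conc_def by (intro CollectI exI[of _ "[]"] exI[of _ v]) (simp add: Nil_in_word_star)
next
  fix w assume "w \<in> conc A (conc (word_star A) B)"
  then obtain u v v' where "w = u @ v @ v'" "u \<in> A" "v \<in> word_star A" "v' \<in> B"
    unfolding conc_def by blast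
  then show "w \<in> conc (word_star A) B"
    unfolding conc_def by (intro CollectI exI[of _ "u @ v"] exI[of _ v']) (simp add: append_in_word_star)
qed

fun pseq_list :: "'a pomset list \<Rightarrow> 'a pomset" where
  "pseq_list [] = pone"
| "pseq_list (U # Us) = pseq U (pseq_list Us)"

lemma is_pomset_pseq_list: "Us \<in> lists (Collect is_pomset) \<Longrightarrow> is_pomset (pseq_list Us)"
  by (induction Us) (simp_all add: is_pomset_pone is_pomset_pseq)

lemma pseq_list_append:
  "Us \<in> lists (Collect is_pomset) \<Longrightarrow> Vs \<in> lists (Collect is_pomset) \<Longrightarrow>
    pseq_list (Us @ Vs) = pseq (pseq_list Us) (pseq_list Vs)"
  by (induction Us) (simp_all add: pseq_pone_left is_pomset_pseq_list pseq_assoc)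

lemma image_pseq_list_conc:
  assumes "A \<subseteq> lists (Collect is_pomset)" "B \<subseteq> lists (Collect is_pomset)"
  shows "pseq_list ` conc A B = lseq (pseq_list ` A) (pseq_list ` B)"
proof (intro equalityI subsetI)
  have append: "pseq_list (u @ v) = pseq (pseq_list u) (pseq_list v)" if "u \<in> A" "v \<in> B" for u v
    using that assms by (intro pseq_list_append) auto
  fix W
  {
    assume "W \<in> pseq_list ` conc A B"
    then obtain u v where "W = pseq_list (u @ v)" "u \<in> A" "v \<in> B"
      unfolding conc_def by blast
    then show "W \<in> lseq (pseq_list ` A) (pseq_list ` B)"
      unfolding lseq_def by (auto simp: append)
  next
    assume "W \<in> lseq (pseq_list ` A) (pseq_list ` B)"
    then obtain u v where "W = pseq (pseq_list u) (pseq_list v)" "u \<in> A" "v \<in> B"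
      unfolding lseq_def by blast
    then show "W \<in> pseq_list ` conc A B"
      unfolding conc_def by (intro image_eqI[of _ _ "u @ v"]) (auto simp: append)
  }
qed

lemma image_pseq_list_word_star:
  assumes "A \<subseteq> lists (Collect is_pomset)"
  shows "pseq_list ` word_star A = lstar (pseq_list ` A)"
proof -
  have "pseq_list ` word_pow A n = lpow (pseq_list ` A) n" for n
    using assms by (induction n) (simp_all add: image_pseq_list_conc word_pow_in_lists)
  then show ?thesis
    unfolding word_star_def lstar_def by (simp add: image_UN)
qed

text \<open>Only the intermediate states of a walk are required to lie in \<open>X\<close>.\<close>
inductive walk :: "('q \<Rightarrow> 'q \<Rightarrow> 'b set) \<Rightarrow> 'q set \<Rightarrow> 'q \<Rightarrow> 'b list \<Rightarrow> 'q \<Rightarrow> bool"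
  for S X where
  walk_Nil: "walk S X p [] p"
| walk_single: "U \<in> S p p' \<Longrightarrow> walk S X p [U] p'"
| walk_Cons: "U \<in> S p m \<Longrightarrow> m \<in> X \<Longrightarrow> walk S X m Us p' \<Longrightarrow> walk S X p (U # Us) p'"

abbreviation walks :: "('q \<Rightarrow> 'q \<Rightarrow> 'b set) \<Rightarrow> 'q set \<Rightarrow> 'q \<Rightarrow> 'q \<Rightarrow> 'b list set" where
  "walks S X p p' \<equiv> {Us. walk S X p Us p'}"

lemma walk_mono: "walk S X p Us p' \<Longrightarrow> X \<subseteq> Y \<Longrightarrow> walk S Y p Us p'"
  by (induction rule: walk.induct) (auto intro: walk.intros)

lemma walk_append: "walk S X p Us m \<Longrightarrow> m \<in> X \<Longrightarrow> walk S X m Vs p' \<Longrightarrow> walk S X p (Us @ Vs) p'"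
  by (induction rule: walk.induct) (auto intro: walk.intros)

lemma walk_in_lists: "walk S X p Us p' \<Longrightarrow> (\<And>p p'. S p p' \<subseteq> A) \<Longrightarrow> Us \<in> lists A"
  by (induction rule: walk.induct) auto

lemma walk_restrict:
  assumes "walk S X p Us p'" "P p" and closed: "\<And>p m U. U \<in> S p m \<Longrightarrow> P p \<Longrightarrow> P m"
  shows "walk S (X \<inter> Collect P) p Us p'"
  using assms(1,2)
proof (induction rule: walk.induct)
  case (walk_Cons U p m Us p')
  then show ?case using closed by (auto intro: walk.walk_Cons)
qed (auto intro: walk.intros)

lemma walks_empty:
  "walks S {} p p' = (if p = p' then {[]} else {}) \<union> (\<lambda>U. [U]) ` S p p'"
  by (auto elim: walk.cases intro: walk.intros)

lemma walk_word_star: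
  assumes "Us \<in> word_star (walks S X k k)" "k \<in> X"
  shows "walk S X k Us k"
  using assms(1) by (induction rule: word_star_induct) (auto intro: walk.intros walk_append assms(2))

lemma walk_insert_split:
  assumes "walk S (insert k X) p Us p'"
  shows "Us \<in> walks S X p p' \<union>
     conc (walks S X p k) (conc (word_star (walks S X k k)) (walks S X k p'))"
  using assms
proof (induction rule: walk.induct)
  case (walk_Cons U p m Us p')
  show ?case
  proof (cases "m = k")
    case True
    from walk_Cons.IH have "Us \<in> conc (word_star (walks S X k k)) (walks S X k p')"
      unfolding True by (rule subsetD[OF Un_conc_word_star_subset])
    moreover have "walk S X p [U] k"
      using walk_Cons.hyps(1) True by (simp add: walk_single)
    ultimately show ?thesis
      unfolding conc_def[of "walks S X p k"]
      by (intro UnI2 CollectI exI[of _ "[U]"] exI[of _ Us]) simp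
  next
    case False
    with walk_Cons.hyps have "m \<in> X" "U \<in> S p m" by auto
    from walk_Cons.IH show ?thesis
    proof (elim UnE)
      assume "Us \<in> walks S X m p'"
      with \<open>m \<in> X\<close> \<open>U \<in> S p m\<close> show ?thesis by (simp add: walk.walk_Cons)
    next
      assume "Us \<in> conc (walks S X m k) (conc (word_star (walks S X k k)) (walks S X k p'))"
      then obtain u w where "Us = u @ w" "walk S X m u k"
        "w \<in> conc (word_star (walks S X k k)) (walks S X k p')"
        unfolding conc_def[of "walks S X m k"] by blast
      moreover from this \<open>m \<in> X\<close> \<open>U \<in> S p m\<close> have "walk S X p (U # u) k"
        by (simp add: walk.walk_Cons)
      ultimately show ?thesis
        unfolding conc_def[of "walks S X p k"]
        by (intro UnI2 CollectI exI[of _ "U # u"] exI[of _ w]) simp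
    qed
  qed
qed (auto intro: walk.intros)

lemma walks_insert:
  "walks S (insert k X) p p' = walks S X p p' \<union>
     conc (walks S X p k) (conc (word_star (walks S X k k)) (walks S X k p'))"
proof (intro equalityI subsetI)
  fix Us
  assume "Us \<in> walks S (insert k X) p p'"
  then have "walk S (insert k X) p Us p'"
    by simp
  then show "Us \<in> walks S X p p' \<union>
     conc (walks S X p k) (conc (word_star (walks S X k k)) (walks S X k p'))"
    by (rule walk_insert_split)
next
  have lift: "walk S X q Vs q' \<Longrightarrow> walk S (insert k X) q Vs q'" for q Vs q'
    by (erule walk_mono) blast
  fix Us
  assume "Us \<in> walks S X p p' \<union>
     conc (walks S X p k) (conc (word_star (walks S X k k)) (walks S X k p'))"
  then consider "walk S X p Us p'"
    | u v w where "Us = u @ v @ w" "walk S X p u k" "v \<in> word_star (walks S X k k)" "walk S X k w p'"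
    unfolding conc_def by blast
  then show "Us \<in> walks S (insert k X) p p'"
  proof cases
    case 2
    have "v \<in> word_star (walks S (insert k X) k k)"
      using 2(3) by (rule subsetD[OF word_star_mono, rotated]) (auto intro: lift)
    then have "walk S (insert k X) k v k"
      by (rule walk_word_star) simp
    then have "walk S (insert k X) p (u @ v @ w) p'"
      by (intro walk_append[OF lift[OF 2(2)] _ walk_append[OF _ _ lift[OF 2(4)]]]) simp_all
    with 2(1) show ?thesis
      by simp
  qed (simp add: lift)
qed

lemma sr_rational_walks:
  assumes "finite X" "X \<subseteq> Y" "p \<in> Y"
    and pomsets: "\<And>p p'. S p p' \<subseteq> Collect is_pomset"
    and rational: "\<And>p p'. p \<in> Y \<Longrightarrow> sr_rational (S p p')"
  shows "sr_rational (pseq_list ` walks S X p p')"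
  using assms(1-3)
proof (induction X arbitrary: p p' rule: finite_induct)
  case empty
  have "is_pomset U" if "U \<in> S p p'" for U
    using pomsets that by blast
  then have "pseq_list ` (\<lambda>U. [U]) ` S p p' = (\<lambda>U. U) ` S p p'"
    unfolding image_image by (intro image_cong) (simp_all add: pseq_pone_right)
  then have "pseq_list ` walks S {} p p' = (if p = p' then {pone} else {}) \<union> S p p'"
    by (simp add: walks_empty image_Un)
  then show ?case
    using rational[OF \<open>p \<in> Y\<close>] by (simp add: sr_rational_Un sr_rational_pone sr_rational_empty)
next
  case (insert k X)
  have lists: "walks S X q q' \<subseteq> lists (Collect is_pomset)" for q q'
  proof
    fix Us assume "Us \<in> walks S X q q'"
    then show "Us \<in> lists (Collect is_pomset)"
      by (intro walk_in_lists[where S = S] pomsets) simp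
  qed
  have "k \<in> Y" "X \<subseteq> Y"
    using insert.prems by auto
  then show ?case
    unfolding walks_insert image_Un
    by (simp add: lists image_pseq_list_conc image_pseq_list_word_star conc_in_lists word_star_in_lists
        sr_rational_Un sr_rational_lseq sr_rational_lstar insert.IH insert.prems)
qed

definition fork_lang :: "'q set \<Rightarrow> ('q \<Rightarrow> 'a \<Rightarrow> 'q set) \<Rightarrow> ('q \<Rightarrow> 'q multiset \<Rightarrow> 'q set)
    \<Rightarrow> 'q list \<Rightarrow> 'a pomset set" where
  "fork_lang F d g qs = ppar_list ` {Us. list_all2 (\<lambda>q U. U \<in> lang F d g q) qs Us}"

definition step_lang :: "'q set \<Rightarrow> ('q \<Rightarrow> 'a \<Rightarrow> 'q set) \<Rightarrow> ('q \<Rightarrow> 'q multiset \<Rightarrow> 'q set)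
    \<Rightarrow> 'q \<Rightarrow> 'q \<Rightarrow> 'a pomset set" where
  "step_lang F d g p p' =
     {patom a | a. p' \<in> d p a} \<union> (\<Union>qs \<in> {qs. p' \<in> g p (mset qs)}. fork_lang F d g qs)"

lemma run_par_list_all2:
  "p' \<in> g p (mset qs) \<Longrightarrow> list_all2 (\<lambda>q U. U \<in> lang F d g q) qs Us \<Longrightarrow> run F d g p (ppar_list Us) p'"
  unfolding list_all2_conv_all_nth lang_def by (auto intro: run_par)

lemma run_is_pomset: "run F d g p U p' \<Longrightarrow> is_pomset U"
proof (induction rule: run.induct)
  case (run_par q' q qs Us)
  show ?case
  proof (rule is_pomset_ppar_list)
    fix U assume "U \<in> set Us"
    then obtain i where "i < length qs" "U = Us ! i"
      using run_par.hyps(2) by (metis in_set_conv_nth)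
    with run_par.IH show "is_pomset U"
      by blast
  qed
qed (simp_all add: is_pomset_pone is_pomset_patom is_pomset_pseq)

lemma step_lang_run: "U \<in> step_lang F d g p p' \<Longrightarrow> run F d g p U p'"
  unfolding step_lang_def fork_lang_def by (auto intro: run_atom run_par_list_all2)

lemma step_lang_is_pomset: "step_lang F d g p p' \<subseteq> Collect is_pomset"
proof
  fix U assume "U \<in> step_lang F d g p p'"
  then show "U \<in> Collect is_pomset"
    by (simp add: run_is_pomset[OF step_lang_run])
qed

lemma walk_imp_run: "walk (step_lang F d g) X p Us p' \<Longrightarrow> run F d g p (pseq_list Us) p'"
proof (induction rule: walk.induct)
  case (walk_single U p p')
  then show ?case
    using run_seq[OF step_lang_run run_one] by simp
qed (auto intro: run_one run_seq step_lang_run)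

lemma run_imp_walk:
  "run F d g p U p' \<Longrightarrow> \<exists>Us. walk (step_lang F d g) UNIV p Us p' \<and> U = pseq_list Us"
proof (induction rule: run.induct)
  case (run_one q)
  show ?case
    by (intro exI[of _ "[]"]) (simp add: walk_Nil)
next
  case (run_atom q' q a)
  then have "patom a \<in> step_lang F d g q q'"
    unfolding step_lang_def by blast
  then show ?case
    by (intro exI[of _ "[patom a]"]) (simp add: walk_single pseq_pone_right is_pomset_patom)
next
  case (run_seq q U q'' V q')
  then obtain Us Vs where "walk (step_lang F d g) UNIV q Us q''" "U = pseq_list Us"
    "walk (step_lang F d g) UNIV q'' Vs q'" "V = pseq_list Vs"
    by blast
  moreover have "Us \<in> lists (Collect is_pomset)" "Vs \<in> lists (Collect is_pomset)"
    using calculation walk_in_lists[where S = "step_lang F d g", OF _ step_lang_is_pomset] by blast+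
  ultimately show ?case
    by (intro exI[of _ "Us @ Vs"]) (simp add: walk_append pseq_list_append)
next
  case (run_par q' q qs Us)
  then have "list_all2 (\<lambda>q U. U \<in> lang F d g q) qs Us"
    unfolding list_all2_conv_all_nth lang_def by auto
  with run_par.hyps(1) have "ppar_list Us \<in> step_lang F d g q q'"
    unfolding step_lang_def fork_lang_def by blast
  moreover from this have "is_pomset (ppar_list Us)"
    by (intro run_is_pomset step_lang_run)
  ultimately show ?case
    by (intro exI[of _ "[ppar_list Us]"]) (simp add: walk_single pseq_pone_right)
qed

lemma run_iff_walk:
  "run F d g p U p' \<longleftrightarrow> (\<exists>Us. walk (step_lang F d g) UNIV p Us p' \<and> U = pseq_list Us)"
proof
  assume "run F d g p U p'"
  then show "\<exists>Us. walk (step_lang F d g) UNIV p Us p' \<and> U = pseq_list Us"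
    by (rule run_imp_walk)
next
  assume "\<exists>Us. walk (step_lang F d g) UNIV p Us p' \<and> U = pseq_list Us"
  then show "run F d g p U p'"
    using walk_imp_run by auto
qed

lemma lang_eq_walks: "lang F d g q = (\<Union>p'\<in>F. pseq_list ` walks (step_lang F d g) UNIV q p')"
  unfolding lang_def run_iff_walk by (rule set_eqI) (simp add: image_iff)

lemma supports_step_lang:
  assumes "U \<in> step_lang F d g p m" "supports d g p q"
  shows "supports d g m q"
proof -
  from assms(1) have "(m, p) \<in> supp_step d g"
    unfolding step_lang_def fork_lang_def supp_step_def by auto
  then show ?thesis
    using assms(2) unfolding supports_def by (rule converse_rtrancl_into_rtrancl)
qed

lemma supports_refl: "supports d g q q"
  unfolding supports_def by simp

lemma walks_within_supporters:
  "walks (step_lang F d g) UNIV q p' = walks (step_lang F d g) {p. supports d g p q} q p'"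
proof (intro equalityI subsetI CollectI; elim CollectE)
  fix Us assume "walk (step_lang F d g) UNIV q Us p'"
  then have "walk (step_lang F d g) (UNIV \<inter> {p. supports d g p q}) q Us p'"
    by (rule walk_restrict) (auto intro: supports_refl supports_step_lang)
  then show "walk (step_lang F d g) {p. supports d g p q} q Us p'"
    by simp
qed (erule walk_mono, simp)

lemma sr_rational_fork_lang:
  "(\<And>r. r \<in> set qs \<Longrightarrow> sr_rational (lang F d g r)) \<Longrightarrow> sr_rational (fork_lang F d g qs)"
proof (induction qs)
  case Nil
  then show ?case
    by (simp add: fork_lang_def sr_rational_pone)
next
  case (Cons r qs)
  have "fork_lang F d g (r # qs) = lpar (lang F d g r) (fork_lang F d g qs)"
  proof (intro equalityI subsetI)
    fix W assume "W \<in> fork_lang F d g (r # qs)"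
    then obtain U Us where "W = ppar U (ppar_list Us)" "U \<in> lang F d g r"
      "list_all2 (\<lambda>q U. U \<in> lang F d g q) qs Us"
      unfolding fork_lang_def list_all2_Cons1 by auto
    then show "W \<in> lpar (lang F d g r) (fork_lang F d g qs)"
      unfolding lpar_def fork_lang_def by blast
  next
    fix W assume "W \<in> lpar (lang F d g r) (fork_lang F d g qs)"
    then obtain U Us where "W = ppar U (ppar_list Us)" "U \<in> lang F d g r"
      "list_all2 (\<lambda>q U. U \<in> lang F d g q) qs Us"
      unfolding lpar_def fork_lang_def by blast
    then show "W \<in> fork_lang F d g (r # qs)"
      unfolding fork_lang_def by (intro image_eqI[of _ _ "U # Us"]) simp_all
  qed
  with Cons show ?case
    by (simp add: sr_rational_lpar)
qed

lemma finite_fork_lists: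
  assumes "pomset_automaton g"
  shows "finite {qs :: 'q::finite list. p' \<in> g p (mset qs)}"
proof -
  have "finite {\<phi>. g p \<phi> \<noteq> {}}"
    using assms unfolding pomset_automaton_def by blast
  then have "finite (\<Union>\<phi>\<in>{\<phi>. g p \<phi> \<noteq> {}}. {qs :: 'q list. set qs \<subseteq> UNIV \<and> length qs = size \<phi>})"
    by (intro finite_UN_I finite_lists_length_eq) simp_all
  then show ?thesis
    by (rule finite_subset[rotated]) auto
qed

lemma sr_rational_step_lang:
  fixes d :: "'q::finite \<Rightarrow> 'a::finite \<Rightarrow> 'q set"
  assumes "pomset_automaton g"
    and forks: "\<And>\<phi> r. g p \<phi> \<noteq> {} \<Longrightarrow> r \<in># \<phi> \<Longrightarrow> sr_rational (lang F d g r)"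
  shows "sr_rational (step_lang F d g p p')"
proof -
  have "{patom a | a. p' \<in> d p a} = (\<Union>a\<in>{a. p' \<in> d p a}. {patom a})"
    by blast
  then have "sr_rational {patom a | a. p' \<in> d p a}"
    by (simp add: sr_rational_UN sr_rational_patom)
  moreover have "sr_rational (\<Union>qs \<in> {qs. p' \<in> g p (mset qs)}. fork_lang F d g qs)"
    using finite_fork_lists[OF assms(1)] by (auto intro!: sr_rational_UN sr_rational_fork_lang forks)
  ultimately show ?thesis
    unfolding step_lang_def by (rule sr_rational_Un)
qed

lemma card_supporters_fork_less:
  fixes d :: "'q::finite \<Rightarrow> 'a \<Rightarrow> 'q set"
  assumes "fork_acyclic d g" "supports d g p q" "g p \<phi> \<noteq> {}" "r \<in># \<phi>"
  shows "card {x. supports d g x r} < card {x. supports d g x q}"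
proof (rule psubset_card_mono)
  have "(r, p) \<in> supp_step d g"
    unfolding supp_step_def using assms(3,4) by blast
  then have "supports d g r q"
    using assms(2) unfolding supports_def by (rule converse_rtrancl_into_rtrancl)
  then have "{x. supports d g x r} \<subseteq> {x. supports d g x q}"
    unfolding supports_def by auto
  moreover have "\<not> supports d g q r"
  proof
    assume "supports d g q r"
    with assms(2) have "supports d g p r"
      unfolding supports_def by auto
    with assms(1,3,4) show False
      unfolding fork_acyclic_def by blast
  qed
  then have "q \<notin> {x. supports d g x r}"
    by simp
  moreover have "q \<in> {x. supports d g x q}"
    by (simp add: supports_refl)
  ultimately show "{x. supports d g x r} \<subset> {x. supports d g x q}"
    by blast
qed simp

theorem theorem8p4:
  fixes F :: "'q::finite set"
    and d :: "'q \<Rightarrow> 'a::finite \<Rightarrow> 'q set"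
    and g :: "'q \<Rightarrow> 'q multiset \<Rightarrow> 'q set"
  assumes "pomset_automaton g"
    and "fork_acyclic d g"
  shows "\<forall>q. \<exists>e :: 'a srexp. sem e = lang F d g q"
proof
  fix q
  show "\<exists>e :: 'a srexp. sem e = lang F d g q"
    unfolding sr_rational_def[symmetric]
  proof (induction q rule: measure_induct_rule[where f = "\<lambda>q. card {x. supports d g x q}"])
    case (less q)
    have steps: "sr_rational (step_lang F d g p p')" if "p \<in> {p. supports d g p q}" for p p'
      using assms(1) by (rule sr_rational_step_lang)
        (use that in \<open>blast intro: less card_supporters_fork_less[OF assms(2)]\<close>)
    have "sr_rational (pseq_list ` walks (step_lang F d g) {p. supports d g p q} q p')" for p'
      by (rule sr_rational_walks[OF finite subset_refl _ step_lang_is_pomset steps]) (simp add: supports_refl)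
    then show ?case
      unfolding lang_eq_walks walks_within_supporters by (simp add: sr_rational_UN)
  qed
qed

end
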